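(* Let $n\ge1$ and let $x\in\mathbb{Z}_n$ have order $m$. Then the degree of $x$ in $OD(\mathbb{Z}_n)$ is $$\deg(x)=m-2\phi(m)+\sum_{\lambda\mid \frac{n}{m}}\phi(\lambda m),$$ where $\phi$ is Euler's totient function and the sum runs over positive divisors $\lambda$ of $n/m$.
   Context: $\mathbb{Z}_n$ is the additive cyclic group of integers modulo $n$. For a finite group $G$, $o(x)$ denotes the order of $x\in G$. The order-divisor graph $OD(G)$ is the simple undirected graph with vertex set $G$, in which two distinct vertices $x,y$ are adjacent if and only if $o(x)\neq o(y)$ and either $o(x)\mid o(y)$ or $o(y)\mid o(x)$. *)

theory Defs
  imports "HOL-Algebra.Elementary_Groups" "HOL-Algebra.Multiplicative_Group" "HOL-Number_Theory.Totient"
begin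

definition od_adj :: "('a, 'b) monoid_scheme \<Rightarrow> 'a \<Rightarrow> 'a \<Rightarrow> bool" where
  "od_adj G x y \<longleftrightarrow> x \<noteq> y \<and> group.ord G x \<noteq> group.ord G y \<and>
     (group.ord G x dvd group.ord G y \<or> group.ord G y dvd group.ord G x)"

definition od_degree :: "('a, 'b) monoid_scheme \<Rightarrow> 'a \<Rightarrow> nat" where
  "od_degree G x = card {y \<in> carrier G. od_adj G x y}"

end

theory Submission
  imports Defs
begin

text \<open>In any finite group, the neighbours of \<open>x\<close> in the order-divisor graph are the
elements whose order is a divisor of \<open>|G|\<close> different from \<open>ord x\<close> but comparable with it
under divisibility, so the degree is a sum of sizes of order classes. In \<open>\<int>\<^sub>n\<close> the elements of
order \<open>d\<close>, for \<open>d\<close> dividing \<open>n\<close>, are the residues \<open>k\<close> with \<open>gcd k n = n / d\<close>; there are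
\<open>\<phi>(d)\<close> of them. Splitting the comparable divisors into the divisors of \<open>m\<close> and the multiples
of \<open>m\<close> dividing \<open>n\<close>, which overlap exactly in \<open>m\<close>, and using that \<open>\<phi>(d)\<close> summed over the divisors
of \<open>m\<close> is \<open>m\<close> gives the formula.\<close>

lemma ord_integer_mod_group:
  assumes "n > 0" and "y \<in> carrier (integer_mod_group n)"
  shows "group.ord (integer_mod_group n) y = n div gcd (nat y) n"
proof -
  interpret G: group "integer_mod_group n" by simp
  have "y \<ge> 0" using assms by (simp add: carrier_integer_mod_group)
  have "y [^]\<^bsub>integer_mod_group n\<^esub> k = \<one>\<^bsub>integer_mod_group n\<^esub> \<longleftrightarrow> n dvd k * nat y"
    for k :: nat
  proof -
    have "int k * y = int (k * nat y)" using \<open>y \<ge> 0\<close> by simp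
    then show ?thesis
      by (simp only: pow_integer_mod_group one_integer_mod_group of_nat_dvd_iff
          flip: dvd_eq_mod_eq_0)
  qed
  also have "n dvd k * nat y \<longleftrightarrow> n div gcd (nat y) n dvd k" for k
    using assms(1) by (simp add: div_dvd_iff_mult gcd_mult_distrib_nat)
  finally show ?thesis
    using assms(2) by (simp add: G.ord_unique)
qed

lemma order_integer_mod_group:
  "n > 0 \<Longrightarrow> order (integer_mod_group n) = n"
  by (simp add: order_def carrier_integer_mod_group)

text \<open>The residue \<open>0\<close> is represented by \<open>k = n\<close>, matching the range \<open>{0<..n}\<close> used by
  \<open>card_gcd_eq_totient\<close>.\<close>

lemma bij_betw_mod_integer_mod_group:
  assumes "n > 0"
  shows "bij_betw (\<lambda>k. int (k mod n)) {0<..n} (carrier (integer_mod_group n))"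
proof (rule bij_betw_imageI)
  show "inj_on (\<lambda>k. int (k mod n)) {0<..n}"
    by (rule inj_onI)
      (metis greaterThanAtMost_iff le_neq_implies_less mod_less mod_self of_nat_eq_iff neq0_conv)
  show "(\<lambda>k. int (k mod n)) ` {0<..n} = carrier (integer_mod_group n)"
  proof (intro equalityI subsetI)
    fix y assume "y \<in> carrier (integer_mod_group n)"
    then have "0 \<le> y" "y < int n" using assms by (auto simp: carrier_integer_mod_group)
    then show "y \<in> (\<lambda>k. int (k mod n)) ` {0<..n}"
      using assms
      by (cases "y = 0") (force intro: image_eqI[of _ _ n], force intro: image_eqI[of _ _ "nat y"])
  qed (use assms in \<open>auto simp: carrier_integer_mod_group\<close>)
qed

lemma card_ord_eq_integer_mod_group:
  assumes "n > 0" and "d dvd n"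
  shows "card {y \<in> carrier (integer_mod_group n). group.ord (integer_mod_group n) y = d} = totient d"
proof -
  let ?f = "\<lambda>k. int (k mod n)"
  have d: "d > 0" "n div d dvd n" "n div (n div d) = d"
    using assms by (auto intro: dvd_div_eq_mult simp: div_dvd_iff_mult)
  have ord_f: "group.ord (integer_mod_group n) (?f k) = d \<longleftrightarrow> gcd k n = n div d" for k
  proof -
    have "group.ord (integer_mod_group n) (?f k) = n div gcd k n"
      using assms(1) by (simp add: ord_integer_mod_group carrier_integer_mod_group gcd_mod_left)
    moreover have "n div gcd k n = d \<longleftrightarrow> gcd k n = n div d"
      using assms d by (metis dvd_mult_div_cancel gcd_dvd2 div_mult_self1_is_m mult.commute)
    ultimately show ?thesis by simp
  qed
  have bij: "bij_betw ?f {0<..n} (carrier (integer_mod_group n))"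
    using assms(1) by (rule bij_betw_mod_integer_mod_group)
  have image_filter: "{y \<in> g ` A. P y} = g ` {k \<in> A. P (g k)}"
    for g :: "nat \<Rightarrow> int" and A P
    by blast
  have "{y \<in> carrier (integer_mod_group n). group.ord (integer_mod_group n) y = d}
          = {y \<in> ?f ` {0<..n}. group.ord (integer_mod_group n) y = d}"
    by (simp only: bij_betw_imp_surj_on[OF bij])
  also have "\<dots> = ?f ` {k \<in> {0<..n}. group.ord (integer_mod_group n) (?f k) = d}"
    by (rule image_filter)
  also have "\<dots> = ?f ` {k \<in> {0<..n}. gcd k n = n div d}"
    by (simp only: ord_f)
  also have "card \<dots> = card {k \<in> {0<..n}. gcd k n = n div d}"
    using bij_betw_imp_inj_on[OF bij] by (rule card_image[OF inj_on_subset]) (rule Collect_subset)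
  also have "\<dots> = totient d"
    using card_gcd_eq_totient[of n "n div d"] assms d by simp
  finally show ?thesis .
qed

definition comparable_divisors :: "nat \<Rightarrow> nat \<Rightarrow> nat set" where
  "comparable_divisors n m = {d. d dvd n \<and> d \<noteq> m \<and> (d dvd m \<or> m dvd d)}"

lemma (in group) od_neighbours_eq_Union:
  assumes "x \<in> carrier G"
  shows "{y \<in> carrier G. od_adj G x y}
           = (\<Union>d \<in> comparable_divisors (order G) (ord x). {y \<in> carrier G. ord y = d})"
  unfolding od_adj_def comparable_divisors_def using ord_dvd_group_order assms by auto

lemma (in group) od_degree_eq_sum_card_ord:
  assumes "finite (carrier G)" and "x \<in> carrier G"
  shows "od_degree G x
           = (\<Sum>d \<in> comparable_divisors (order G) (ord x). card {y \<in> carrier G. ord y = d})"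
proof -
  have "finite (comparable_divisors (order G) (ord x))"
    by (rule finite_subset[of _ "{d. d dvd order G}"])
      (auto simp: comparable_divisors_def assms(1) order_gt_0_iff_finite)
  then show ?thesis
    unfolding od_degree_def od_neighbours_eq_Union[OF assms(2)]
    using assms(1) by (subst card_UN_disjoint) auto
qed

lemma sum_dvd_multiples_reindex:
  fixes f :: "nat \<Rightarrow> 'a::comm_monoid_add"
  assumes "m > 0" "m dvd n"
  shows "(\<Sum>d | m dvd d \<and> d dvd n. f d) = (\<Sum>l | l dvd n div m. f (l * m))"
proof (rule sum.reindex_bij_witness[of _ "\<lambda>l. l * m" "\<lambda>d. d div m"])
  fix d assume "d \<in> {d. m dvd d \<and> d dvd n}"
  then show "d div m * m = d" "d div m \<in> {l. l dvd n div m}"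
    by (auto intro: div_dvd_div)
qed (use assms in \<open>auto simp: dvd_div_iff_mult\<close>)

lemma sum_totient_comparable_divisors:
  assumes "n > 0" and "m dvd n"
  shows "(\<Sum>d \<in> comparable_divisors n m. int (totient d))
           = int m - 2 * int (totient m) + (\<Sum>l | l dvd n div m. int (totient (l * m)))"
proof -
  have fin: "finite {d. d dvd m}" "finite {d. m dvd d \<and> d dvd n}"
    using assms by (auto intro: finite_subset[of _ "{d. d dvd n}"])
  have meet: "{d. d dvd m} \<inter> {d. m dvd d \<and> d dvd n} = {m}"
    using assms(2) by (auto intro: dvd_antisym)
  have "comparable_divisors n m = ({d. d dvd m} \<union> {d. m dvd d \<and> d dvd n}) - {m}"
    using assms(2) by (auto simp: comparable_divisors_def intro: dvd_trans)
  then have "(\<Sum>d \<in> comparable_divisors n m. int (totient d))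
          = (\<Sum>d | d dvd m. int (totient d)) + (\<Sum>d | m dvd d \<and> d dvd n. int (totient d))
            - 2 * int (totient m)"
    using fin meet by (simp add: sum_diff1 sum_Un)
  also have "(\<Sum>d | d dvd m. int (totient d)) = int m"
    by (simp flip: of_nat_sum add: totient_divisor_sum)
  also have "(\<Sum>d | m dvd d \<and> d dvd n. int (totient d))
               = (\<Sum>l | l dvd n div m. int (totient (l * m)))"
    using dvd_pos_nat[OF assms] assms(2) by (rule sum_dvd_multiples_reindex)
  finally show ?thesis by simp
qed

theorem mainTheorem11:
  fixes n :: nat and x :: int
  assumes "n \<ge> 1"
    and "x \<in> carrier (integer_mod_group n)"
  shows "int (od_degree (integer_mod_group n) x) =
           int (group.ord (integer_mod_group n) x)
           - 2 * int (totient (group.ord (integer_mod_group n) x))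
           + (\<Sum>l\<in>{l::nat. l dvd n div group.ord (integer_mod_group n) x}.
                 int (totient (l * group.ord (integer_mod_group n) x)))"
proof -
  interpret G: group "integer_mod_group n" by simp
  let ?m = "G.ord x"
  have n: "n > 0" and fin: "finite (carrier (integer_mod_group n))"
    using assms(1) by (auto simp: carrier_integer_mod_group)
  have order: "order (integer_mod_group n) = n"
    using n by (rule order_integer_mod_group)
  have m: "?m dvd n"
    using G.ord_dvd_group_order[OF assms(2)] order by simp
  have "od_degree (integer_mod_group n) x = (\<Sum>d \<in> comparable_divisors n ?m. totient d)"
    unfolding G.od_degree_eq_sum_card_ord[OF fin assms(2)] order
    by (intro sum.cong refl card_ord_eq_integer_mod_group[OF n])
      (simp add: comparable_divisors_def)
  then show ?thesis
    using sum_totient_comparable_divisors[OF n m] by simp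
qed

end
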